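(* Let $n\ge 1$ and $s\geq 3$ be integers. There exists a sudoku array of type $\mathrm{SA}(s,n)$ if and only if there exist $s-2$ mutually orthogonal sudoku solutions of order $n^2$.
   Context: A sudoku solution of order $n^2$ is an $n^2\times n^2$ Latin square on $n^2$ symbols in which, in addition, each symbol appears exactly once in each of the $n^2$ canonical $n\times n$ subsquares (the subsquares formed by rows $an,\dots,an+n-1$ and columns $bn,\dots,bn+n-1$, $0\le a,b\le n-1$). Two Latin squares of the same order are orthogonal if, upon superimposition, each ordered pair of symbols appears exactly once; a family is mutually orthogonal if its members are pairwise orthogonal. A sudoku array of type $\mathrm{SA}(s,n)$ is a $2s\times n^4$ array with entries from an alphabet of size $n$, whose rows are partitioned into $s$ bands of two rows each and labeled $(i,j)$, $1\le i\le s$, $j\in\{1,2\}$ (row $(i,j)$ is the $j$-th row of the $i$-th band). A set $T$ of $4$ rows is top-justified if whenever row $(i,2)\in T$ then also $(i,1)\in T$; it is sudoku top-justified if it is top-justified and moreover, for every $i\ge 3$, $(i,1)\in T$ implies $(i,2)\in T$. The requirement is: for every sudoku top-justified set $T$ of $4$ rows, the $4\times n^4$ subarray formed by the rows in $T$ contains each $4$-tuple over the alphabet exactly once as a column. *)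

theory Defs
  imports Main
begin

definition latin_square :: "nat \<Rightarrow> (nat \<Rightarrow> nat \<Rightarrow> nat) \<Rightarrow> bool" where
  "latin_square m L \<longleftrightarrow>
     (\<forall>i<m. bij_betw (\<lambda>j. L i j) {..<m} {..<m}) \<and>
     (\<forall>j<m. bij_betw (\<lambda>i. L i j) {..<m} {..<m})"

definition sudoku_solution :: "nat \<Rightarrow> (nat \<Rightarrow> nat \<Rightarrow> nat) \<Rightarrow> bool" where
  "sudoku_solution n L \<longleftrightarrow>
     latin_square (n^2) L \<and>
     (\<forall>a<n. \<forall>b<n. bij_betw (\<lambda>(x, y). L (a * n + x) (b * n + y))
                              ({..<n} \<times> {..<n}) {..<n^2})"

definition orthogonal :: "nat \<Rightarrow> (nat \<Rightarrow> nat \<Rightarrow> nat) \<Rightarrow> (nat \<Rightarrow> nat \<Rightarrow> nat) \<Rightarrow> bool" where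
  "orthogonal m L1 L2 \<longleftrightarrow>
     bij_betw (\<lambda>(i, j). (L1 i j, L2 i j)) ({..<m} \<times> {..<m}) ({..<m} \<times> {..<m})"

definition mutually_orthogonal_sudokus :: "nat \<Rightarrow> nat \<Rightarrow> (nat \<Rightarrow> nat \<Rightarrow> nat \<Rightarrow> nat) \<Rightarrow> bool" where
  "mutually_orthogonal_sudokus k n Ls \<longleftrightarrow>
     (\<forall>t<k. sudoku_solution n (Ls t)) \<and>
     (\<forall>t<k. \<forall>u<k. t \<noteq> u \<longrightarrow> orthogonal (n^2) (Ls t) (Ls u))"

definition sa_rows :: "nat \<Rightarrow> (nat \<times> nat) set" where
  "sa_rows s = {1..s} \<times> {1, 2}"

definition sudoku_top_justified :: "nat \<Rightarrow> (nat \<times> nat) set \<Rightarrow> bool" where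
  "sudoku_top_justified s T \<longleftrightarrow>
     T \<subseteq> sa_rows s \<and> card T = 4 \<and>
     (\<forall>i. (i, 2) \<in> T \<longrightarrow> (i, 1) \<in> T) \<and>
     (\<forall>i\<ge>3. (i, 1) \<in> T \<longrightarrow> (i, 2) \<in> T)"

definition sudoku_array :: "nat \<Rightarrow> nat \<Rightarrow> (nat \<times> nat \<Rightarrow> nat \<Rightarrow> nat) \<Rightarrow> bool" where
  "sudoku_array s n A \<longleftrightarrow>
     (\<forall>r\<in>sa_rows s. \<forall>c<n^4. A r c < n) \<and>
     (\<forall>T. sudoku_top_justified s T \<longrightarrow>
        (\<forall>f. (\<forall>r\<in>T. f r < n) \<longrightarrow> (\<exists>!c. c < n^4 \<and> (\<forall>r\<in>T. A r c = f r))))"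

end

theory Submission
  imports Defs "HOL-Library.FuncSet"
begin

(* Read the two rows of band i as the base-n digits of one symbol in {0..<n^2}.  Bands 1 and 2
   then index the n^4 columns bijectively by the cells (R, C) of an n^2 x n^2 grid, and each band
   i \<ge> 3 becomes a square L on that grid.  The sudoku top-justified sets are exactly two full
   bands or {(1,1),(2,1),(i,1),(i,2)} with i \<ge> 3.  Full bands {1,i}, {2,i} and {i,j} say that L
   has Latin rows, Latin columns, and is orthogonal to the square of band j; the last shape fixes
   the high digits of R and C, i.e. a subsquare, and says that L is a sudoku.  Conversely, this
   reading turns mutually orthogonal sudokus into an array; uniqueness of the covering column
   is then automatic, since there are n^4 columns and n^4 tuples to cover. *)

lemma two_digits_less: "x < n \<Longrightarrow> y < n \<Longrightarrow> x * n + y < (n::nat)^2"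
proof -
  assume "x < n" "y < n"
  then have "x * n + y < (x + 1) * n" by simp
  also have "\<dots> \<le> n * n" using \<open>x < n\<close> by (intro mult_le_mono1) simp
  finally show ?thesis by (simp add: power2_eq_square)
qed

lemma high_digit_less: "v < (n::nat)^2 \<Longrightarrow> v div n < n"
  by (simp add: less_mult_imp_div_less power2_eq_square)

lemma low_digit_less: "v < (n::nat)^2 \<Longrightarrow> v mod n < n"
  by (cases "n = 0") simp_all

lemma two_digits_eq_iff:
  assumes "y < n" "y' < (n::nat)"
  shows "x * n + y = x' * n + y' \<longleftrightarrow> x = x' \<and> y = y'"
proof
  assume eq: "x * n + y = x' * n + y'"
  have "(x * n + y) div n = (x' * n + y') div n" "(x * n + y) mod n = (x' * n + y') mod n"
    using eq by simp_all
  then show "x = x' \<and> y = y'" using assms by simp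
qed simp

lemma bij_betw_if_surj_card_eq:
  assumes "finite X" "card X = card Y" "f ` X \<subseteq> Y" "Y \<subseteq> f ` X"
  shows "bij_betw f X Y"
proof (rule bij_betw_imageI)
  show "f ` X = Y" using assms(3,4) by blast
  then show "inj_on f X" using assms(1,2) by (metis eq_card_imp_inj_on)
qed

lemma covering_columns_unique:
  fixes A :: "'r \<Rightarrow> nat \<Rightarrow> nat"
  assumes "finite T"
    and range: "\<forall>r\<in>T. \<forall>c<n ^ card T. A r c < n"
    and cover: "\<And>g. \<forall>r\<in>T. g r < n \<Longrightarrow> \<exists>c<n ^ card T. \<forall>r\<in>T. A r c = g r"
    and f: "\<forall>r\<in>T. f r < n"
  shows "\<exists>!c. c < n ^ card T \<and> (\<forall>r\<in>T. A r c = f r)"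
proof -
  define column where "column c = restrict (\<lambda>r. A r c) T" for c
  have "column ` {..<n ^ card T} = (T \<rightarrow>\<^sub>E {..<n})"
  proof
    show "column ` {..<n ^ card T} \<subseteq> T \<rightarrow>\<^sub>E {..<n}" using range by (auto simp: column_def)
    show "T \<rightarrow>\<^sub>E {..<n} \<subseteq> column ` {..<n ^ card T}"
    proof
      fix g assume g: "g \<in> T \<rightarrow>\<^sub>E {..<n}"
      then obtain c where "c < n ^ card T" "\<forall>r\<in>T. A r c = g r" using cover[of g] by auto
      moreover from this have "column c = g" using g by (auto simp: column_def PiE_def extensional_def)
      ultimately show "g \<in> column ` {..<n ^ card T}" by blast
    qed
  qed
  moreover have "card (T \<rightarrow>\<^sub>E {..<n}) = n ^ card T" using \<open>finite T\<close> by (simp add: card_PiE)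
  ultimately have inj: "inj_on column {..<n ^ card T}" by (intro eq_card_imp_inj_on) simp_all
  obtain c where c: "c < n ^ card T" "\<forall>r\<in>T. A r c = f r" using cover[OF f] by blast
  show ?thesis
  proof (rule ex1I[of _ c])
    fix c' assume c': "c' < n ^ card T \<and> (\<forall>r\<in>T. A r c' = f r)"
    then have "column c' = column c" using c by (auto simp: column_def)
    then show "c' = c" using inj c c' by (auto dest: inj_onD)
  qed (use c in blast)
qed

lemma sudoku_top_justified_two_bands:
  assumes "a \<in> {1..s}" "b \<in> {1..s}" "a \<noteq> b"
  shows "sudoku_top_justified s {(a,1),(a,2),(b,1),(b,2)}"
  using assms by (auto simp: sudoku_top_justified_def sa_rows_def)

lemma sudoku_top_justified_box:
  assumes "3 \<le> i" "i \<le> s"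
  shows "sudoku_top_justified s {(1,1),(2,1),(i,1),(i,2)}"
  using assms by (auto simp: sudoku_top_justified_def sa_rows_def)

lemma sudoku_top_justified_cases:
  assumes "sudoku_top_justified s T"
  obtains a b where "a \<in> {1..s}" "b \<in> {1..s}" "a \<noteq> b" "T = {(a,1),(a,2),(b,1),(b,2)}"
  | i where "3 \<le> i" "i \<le> s" "T = {(1,1),(2,1),(i,1),(i,2)}"
proof -
  define B where "B = {i. (i,1) \<in> T}"
  define B2 where "B2 = {i. (i,2) \<in> T}"
  have T_rows: "T \<subseteq> {1..s} \<times> {1,2}" and card_T: "card T = 4"
    and upper: "\<And>i. (i, 2) \<in> T \<Longrightarrow> (i, 1) \<in> T"
    and lower: "\<And>i. 3 \<le> i \<Longrightarrow> (i, 1) \<in> T \<Longrightarrow> (i, 2) \<in> T"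
    using assms by (auto simp: sudoku_top_justified_def sa_rows_def)
  have B2_B: "B2 \<subseteq> B" using upper by (auto simp: B_def B2_def)
  have B_s: "B \<subseteq> {1..s}" using T_rows by (auto simp: B_def)
  have B_B2: "B - B2 \<subseteq> {1,2}"
  proof
    fix i assume "i \<in> B - B2"
    then have "1 \<le> i" "\<not> 3 \<le> i" using B_s lower by (auto simp: B_def B2_def)
    then show "i \<in> {1,2}" by auto
  qed
  have fin: "finite B" "finite B2" using B_s B2_B by (auto intro: finite_subset)
  have T_eq: "T = B \<times> {1} \<union> B2 \<times> {2}" using T_rows by (auto simp: B_def B2_def)
  have "card (B \<times> {1::nat} \<union> B2 \<times> {2}) = card B + card B2"
    using fin by (subst card_Un_disjoint) (auto simp: card_cartesian_product)
  then have card_B: "card B + card B2 = 4" using card_T T_eq by simp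
  show thesis
  proof (cases "B2 = B")
    case True
    then have "card B = 2" using card_B by simp
    then obtain a b where "B = {a,b}" "a \<noteq> b" by (auto simp: card_2_iff)
    moreover have "T = {(a,1),(a,2),(b,1),(b,2)}" using T_eq True calculation by auto
    ultimately show thesis using that(1) B_s by auto
  next
    case False
    then have "card B2 < card B" using B2_B fin by (simp add: psubset_card_mono)
    moreover have card_diff: "card (B - B2) = card B - card B2"
      using fin(2) B2_B by (rule card_Diff_subset)
    moreover have "card (B - B2) \<le> 2" using card_mono[OF _ B_B2] by simp
    ultimately have "card B = 3" "card B2 = 1" using card_B by linarith+
    then have "card (B - B2) = card {1::nat, 2}" using card_diff by simp
    then have "B - B2 = {1,2}" using B_B2 by (intro card_subset_eq) auto
    moreover obtain i where "B2 = {i}" using \<open>card B2 = 1\<close> by (auto simp: card_1_singleton_iff)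
    ultimately have "B = {1,2,i}" "i \<notin> {1,2}" using B2_B by auto
    moreover from this have "3 \<le> i" "i \<le> s" using B_s by auto
    ultimately show thesis using that(2) T_eq \<open>B2 = {i}\<close> by auto
  qed
qed

lemma sudoku_arrayI:
  assumes range: "\<forall>r\<in>sa_rows s. \<forall>c<n^4. A r c < n"
    and cover: "\<And>T f. sudoku_top_justified s T \<Longrightarrow> \<forall>r\<in>T. f r < n \<Longrightarrow>
      \<exists>c<n^4. \<forall>r\<in>T. A r c = f r"
  shows "sudoku_array s n A"
  unfolding sudoku_array_def
proof (intro conjI allI impI)
  fix T f assume T: "sudoku_top_justified s T" and f: "\<forall>r\<in>T. f r < n"
  have sub: "T \<subseteq> sa_rows s" and card: "card T = 4" using T by (simp_all add: sudoku_top_justified_def)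
  from sub have "finite T" by (rule finite_subset) (simp add: sa_rows_def)
  moreover have "\<forall>r\<in>T. \<forall>c<n ^ card T. A r c < n" using range sub card by auto
  ultimately have "\<exists>!c. c < n ^ card T \<and> (\<forall>r\<in>T. A r c = f r)"
    using cover[OF T] card f by (intro covering_columns_unique) simp_all
  then show "\<exists>!c. c < n^4 \<and> (\<forall>r\<in>T. A r c = f r)" by (simp only: card)
qed (use range in blast)

lemma sudoku_array_less: "sudoku_array s n A \<Longrightarrow> r \<in> sa_rows s \<Longrightarrow> c < n^4 \<Longrightarrow> A r c < n"
  by (simp add: sudoku_array_def)

lemma sudoku_arrayD:
  assumes "sudoku_array s n A" "sudoku_top_justified s T" "\<forall>r\<in>T. f r < n"
  shows "\<exists>!c. c < n^4 \<and> (\<forall>r\<in>T. A r c = f r)"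
  using assms(1)[unfolded sudoku_array_def, THEN conjunct2, rule_format,
      OF assms(2) assms(3)[rule_format]] .

definition band_symbol :: "nat \<Rightarrow> (nat \<times> nat \<Rightarrow> nat \<Rightarrow> nat) \<Rightarrow> nat \<Rightarrow> nat \<Rightarrow> nat" where
  "band_symbol n A i c = A (i, 1) c * n + A (i, 2) c"

lemma band_symbol_less:
  assumes "sudoku_array s n A" "i \<in> {1..s}" "c < n^4"
  shows "band_symbol n A i c < n^2"
proof -
  have "A (i, j) c < n" if "j \<in> {1,2}" for j
    using assms(2) that by (intro sudoku_array_less[OF assms(1) _ assms(3)]) (auto simp: sa_rows_def)
  then show ?thesis unfolding band_symbol_def by (simp add: two_digits_less)
qed

lemma sudoku_array_band_pair:
  assumes sa: "sudoku_array s n A" and ab: "a \<in> {1..s}" "b \<in> {1..s}" "a \<noteq> b"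
    and vw: "v < n^2" "w < n^2"
  shows "\<exists>c<n^4. band_symbol n A a c = v \<and> band_symbol n A b c = w"
proof -
  define f :: "nat \<times> nat \<Rightarrow> nat"
    where "f = (\<lambda>(i, j). let x = if i = a then v else w in if j = 1 then x div n else x mod n)"
  have "\<forall>r\<in>{(a,1),(a,2),(b,1),(b,2)}. f r < n"
    using vw by (auto simp: f_def high_digit_less low_digit_less)
  then obtain c where c: "c < n^4" "\<forall>r\<in>{(a,1),(a,2),(b,1),(b,2)}. A r c = f r"
    using sudoku_arrayD[OF sa sudoku_top_justified_two_bands[OF ab]] by blast
  then have "A (a,1) c = v div n" "A (a,2) c = v mod n" "A (b,1) c = w div n" "A (b,2) c = w mod n"
    using \<open>a \<noteq> b\<close> by (simp_all add: f_def)
  then show ?thesis using c(1) by (auto simp: band_symbol_def)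
qed

lemma sudoku_array_box_band:
  assumes sa: "sudoku_array s n A" and i: "3 \<le> i" "i \<le> s"
    and "x < n" "y < n" "v < n^2"
  shows "\<exists>c<n^4. A (1,1) c = x \<and> A (2,1) c = y \<and> band_symbol n A i c = v"
proof -
  define f :: "nat \<times> nat \<Rightarrow> nat" where "f = (\<lambda>(k, j). if k = 1 then x else if k = 2 then y
    else if j = 1 then v div n else v mod n)"
  have "\<forall>r\<in>{(1,1),(2,1),(i,1),(i,2)}. f r < n"
    using assms by (auto simp: f_def high_digit_less low_digit_less)
  then obtain c where c: "c < n^4" "\<forall>r\<in>{(1,1),(2,1),(i,1),(i,2)}. A r c = f r"
    using sudoku_arrayD[OF sa sudoku_top_justified_box[OF i]] by blast
  then have "A (1,1) c = x" "A (2,1) c = y" "A (i,1) c = v div n" "A (i,2) c = v mod n"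
    using i by (simp_all add: f_def)
  then show ?thesis using c(1) by (auto simp: band_symbol_def)
qed

definition cell_of_column :: "nat \<Rightarrow> (nat \<times> nat \<Rightarrow> nat \<Rightarrow> nat) \<Rightarrow> nat \<Rightarrow> nat \<times> nat" where
  "cell_of_column n A c = (band_symbol n A 1 c, band_symbol n A 2 c)"

lemma sudoku_array_cell_of_column_bij:
  assumes sa: "sudoku_array s n A" and "2 \<le> s"
  shows "bij_betw (cell_of_column n A) {..<n^4} ({..<n^2} \<times> {..<n^2})"
proof (rule bij_betw_imageI)
  show "inj_on (cell_of_column n A) {..<n^4}"
  proof
    fix c c' assume c: "c \<in> {..<n^4}" "c' \<in> {..<n^4}" and eq: "cell_of_column n A c = cell_of_column n A c'"
    let ?T = "{(1,1),(1,2),(2,1),(2,2)}"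
    have T: "sudoku_top_justified s ?T" using \<open>2 \<le> s\<close> by (intro sudoku_top_justified_two_bands) auto
    have digits: "A (i, j) d < n" if "i \<in> {1,2}" "j \<in> {1,2}" "d \<in> {c, c'}" for i j d
      using sudoku_array_less[OF sa] that c \<open>2 \<le> s\<close> by (auto simp: sa_rows_def)
    have "\<exists>!d. d < n^4 \<and> (\<forall>r\<in>?T. A r d = A r c)"
      using digits by (intro sudoku_arrayD[OF sa T]) auto
    moreover have "A (i, 1) c' = A (i, 1) c \<and> A (i, 2) c' = A (i, 2) c" if "i \<in> {1,2}" for i
    proof -
      have "band_symbol n A i c' = band_symbol n A i c"
        using eq that by (auto simp: cell_of_column_def)
      then show ?thesis
        using two_digits_eq_iff digits[OF that, of 2 c] digits[OF that, of 2 c']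
        unfolding band_symbol_def by simp
    qed
    then have "\<forall>r\<in>?T. A r c' = A r c" by auto
    ultimately show "c = c'" using c by blast
  qed
  show "cell_of_column n A ` {..<n^4} = {..<n^2} \<times> {..<n^2}"
  proof
    show "cell_of_column n A ` {..<n^4} \<subseteq> {..<n^2} \<times> {..<n^2}"
      using sa \<open>2 \<le> s\<close> by (auto simp: cell_of_column_def intro!: band_symbol_less)
    show "{..<n^2} \<times> {..<n^2} \<subseteq> cell_of_column n A ` {..<n^4}"
    proof (clarify)
      fix v w assume "v < n^2" "w < n^2"
      then obtain c where "c < n^4" "cell_of_column n A c = (v, w)"
        using sudoku_array_band_pair[OF sa, of 1 2] \<open>2 \<le> s\<close> by (auto simp: cell_of_column_def)
      then show "(v, w) \<in> cell_of_column n A ` {..<n^4}" by force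
    qed
  qed
qed

definition array_square :: "nat \<Rightarrow> (nat \<times> nat \<Rightarrow> nat \<Rightarrow> nat) \<Rightarrow> nat \<Rightarrow> nat \<Rightarrow> nat \<Rightarrow> nat" where
  "array_square n A t R C = band_symbol n A (t + 3) (inv_into {..<n^4} (cell_of_column n A) (R, C))"

lemma array_square_at_column:
  assumes "sudoku_array s n A" "2 \<le> s" "c < n^4"
  shows "array_square n A t (band_symbol n A 1 c) (band_symbol n A 2 c) = band_symbol n A (t + 3) c"
proof -
  have "inj_on (cell_of_column n A) {..<n^4}"
    using sudoku_array_cell_of_column_bij[OF assms(1,2)] by (rule bij_betw_imp_inj_on)
  then have "inv_into {..<n^4} (cell_of_column n A) (cell_of_column n A c) = c"
    using assms(3) by (simp add: inv_into_f_f)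
  then show ?thesis by (simp add: array_square_def cell_of_column_def)
qed

lemma array_square_less:
  assumes sa: "sudoku_array s n A" and "t < s - 2" "R < n^2" "C < n^2"
  shows "array_square n A t R C < n^2"
proof -
  have "2 \<le> s" using assms(2) by simp
  then obtain c where "c < n^4" "band_symbol n A 1 c = R" "band_symbol n A 2 c = C"
    using sudoku_array_band_pair[OF sa, of 1 2] assms by auto
  then show ?thesis
    using array_square_at_column[OF sa] band_symbol_less[OF sa, of "t + 3"] assms by auto
qed

lemma array_square_rows:
  assumes sa: "sudoku_array s n A" and t: "t < s - 2" and R: "R < n^2"
  shows "bij_betw (array_square n A t R) {..<n^2} {..<n^2}"
proof (rule bij_betw_if_surj_card_eq)
  have i: "1 \<in> {1..s}" "2 \<in> {1..s}" "t + 3 \<in> {1..s}" "1 \<noteq> t + 3" "2 \<le> s" using t by auto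
  show "array_square n A t R ` {..<n^2} \<subseteq> {..<n^2}" using array_square_less[OF sa t R] by auto
  show "{..<n^2} \<subseteq> array_square n A t R ` {..<n^2}"
  proof
    fix v assume "v \<in> {..<n^2}"
    then obtain c where "c < n^4" "band_symbol n A 1 c = R" "band_symbol n A (t + 3) c = v"
      using sudoku_array_band_pair[OF sa i(1,3,4)] R by force
    then show "v \<in> array_square n A t R ` {..<n^2}"
      using array_square_at_column[OF sa i(5)] band_symbol_less[OF sa i(2)]
      by (metis image_eqI lessThan_iff)
  qed
qed simp_all

lemma array_square_columns:
  assumes sa: "sudoku_array s n A" and t: "t < s - 2" and C: "C < n^2"
  shows "bij_betw (\<lambda>R. array_square n A t R C) {..<n^2} {..<n^2}"
proof (rule bij_betw_if_surj_card_eq)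
  have i: "1 \<in> {1..s}" "2 \<in> {1..s}" "t + 3 \<in> {1..s}" "2 \<noteq> t + 3" "2 \<le> s" using t by auto
  show "(\<lambda>R. array_square n A t R C) ` {..<n^2} \<subseteq> {..<n^2}"
    using array_square_less[OF sa t _ C] by auto
  show "{..<n^2} \<subseteq> (\<lambda>R. array_square n A t R C) ` {..<n^2}"
  proof
    fix v assume "v \<in> {..<n^2}"
    then obtain c where "c < n^4" "band_symbol n A 2 c = C" "band_symbol n A (t + 3) c = v"
      using sudoku_array_band_pair[OF sa i(2,3,4)] C by force
    then show "v \<in> (\<lambda>R. array_square n A t R C) ` {..<n^2}"
      using array_square_at_column[OF sa i(5)] band_symbol_less[OF sa i(1)]
      by (metis image_eqI lessThan_iff)
  qed
qed simp_all

lemma array_square_boxes: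
  assumes sa: "sudoku_array s n A" and t: "t < s - 2" and "a < n" "b < n"
  shows "bij_betw (\<lambda>(x, y). array_square n A t (a * n + x) (b * n + y)) ({..<n} \<times> {..<n}) {..<n^2}"
proof (rule bij_betw_if_surj_card_eq)
  show "card ({..<n} \<times> {..<n}) = card {..<n^2}"
    by (simp add: card_cartesian_product power2_eq_square)
  show "(\<lambda>(x, y). array_square n A t (a * n + x) (b * n + y)) ` ({..<n} \<times> {..<n}) \<subseteq> {..<n^2}"
    using assms by (auto intro!: array_square_less two_digits_less)
  show "{..<n^2} \<subseteq> (\<lambda>(x, y). array_square n A t (a * n + x) (b * n + y)) ` ({..<n} \<times> {..<n})"
  proof
    fix v assume "v \<in> {..<n^2}"
    moreover have "3 \<le> t + 3" "t + 3 \<le> s" using t by auto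
    ultimately obtain c where c: "c < n^4" "A (1,1) c = a" "A (2,1) c = b" "band_symbol n A (t + 3) c = v"
      using sudoku_array_box_band[OF sa _ _ assms(3,4)] by blast
    have "2 \<le> s" using t by simp
    then have "A (1,2) c < n" "A (2,2) c < n"
      using c(1) by (auto intro!: sudoku_array_less[OF sa] simp: sa_rows_def)
    moreover have "array_square n A t (a * n + A (1,2) c) (b * n + A (2,2) c) = v"
      using array_square_at_column[OF sa \<open>2 \<le> s\<close> c(1), of t] c by (simp add: band_symbol_def)
    ultimately show "v \<in> (\<lambda>(x, y). array_square n A t (a * n + x) (b * n + y)) ` ({..<n} \<times> {..<n})"
      by (intro image_eqI[of _ _ "(A (1,2) c, A (2,2) c)"]) auto
  qed
qed simp

lemma array_squares_orthogonal:
  assumes sa: "sudoku_array s n A" and tu: "t < s - 2" "u < s - 2" "t \<noteq> u"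
  shows "orthogonal (n^2) (array_square n A t) (array_square n A u)"
  unfolding orthogonal_def
proof (rule bij_betw_if_surj_card_eq)
  let ?f = "\<lambda>(R, C). (array_square n A t R C, array_square n A u R C)"
  show "?f ` ({..<n^2} \<times> {..<n^2}) \<subseteq> {..<n^2} \<times> {..<n^2}"
    using tu by (auto intro!: array_square_less[OF sa])
  show "{..<n^2} \<times> {..<n^2} \<subseteq> ?f ` ({..<n^2} \<times> {..<n^2})"
  proof clarify
    fix v w assume "v < n^2" "w < n^2"
    moreover have "t + 3 \<in> {1..s}" "u + 3 \<in> {1..s}" "t + 3 \<noteq> u + 3" using tu by auto
    ultimately obtain c where c: "c < n^4" "band_symbol n A (t + 3) c = v" "band_symbol n A (u + 3) c = w"
      using sudoku_array_band_pair[OF sa, of "t + 3" "u + 3"] by blast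
    have "2 \<le> s" "1 \<in> {1..s}" "2 \<in> {1..s}" using tu by auto
    then have "band_symbol n A 1 c < n^2" "band_symbol n A 2 c < n^2"
      using band_symbol_less[OF sa] c(1) by auto
    moreover have "?f (band_symbol n A 1 c, band_symbol n A 2 c) = (v, w)"
      using array_square_at_column[OF sa \<open>2 \<le> s\<close> c(1)] c by simp
    ultimately show "(v, w) \<in> ?f ` ({..<n^2} \<times> {..<n^2})" by force
  qed
qed simp_all

lemma sudoku_array_imp_mutually_orthogonal_sudokus:
  assumes "sudoku_array s n A"
  shows "mutually_orthogonal_sudokus (s - 2) n (array_square n A)"
  using assms array_square_rows array_square_columns array_square_boxes array_squares_orthogonal
  by (simp add: mutually_orthogonal_sudokus_def sudoku_solution_def latin_square_def)

definition mols_symbol :: "(nat \<Rightarrow> nat \<Rightarrow> nat \<Rightarrow> nat) \<Rightarrow> nat \<Rightarrow> nat \<Rightarrow> nat \<Rightarrow> nat" where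
  "mols_symbol Ls i R C = (if i = 1 then R else if i = 2 then C else Ls (i - 3) R C)"

definition mols_array :: "nat \<Rightarrow> (nat \<Rightarrow> nat \<Rightarrow> nat \<Rightarrow> nat) \<Rightarrow> nat \<times> nat \<Rightarrow> nat \<Rightarrow> nat" where
  "mols_array n Ls r c =
     (let v = mols_symbol Ls (fst r) (c div n^2) (c mod n^2) in if snd r = 1 then v div n else v mod n)"

lemma mols_symbol_less:
  assumes M: "mutually_orthogonal_sudokus (s - 2) n Ls" and "i \<in> {1..s}" "R < n^2" "C < n^2"
  shows "mols_symbol Ls i R C < n^2"
proof (cases "i \<ge> 3")
  case True
  then have "bij_betw (Ls (i - 3) R) {..<n^2} {..<n^2}"
    using M assms(2,3) by (auto simp: mutually_orthogonal_sudokus_def sudoku_solution_def latin_square_def)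
  then show ?thesis using True assms(4) by (auto simp: mols_symbol_def dest: bij_betw_apply)
qed (use assms in \<open>auto simp: mols_symbol_def\<close>)

lemma mols_symbol_pair_ordered:
  assumes M: "mutually_orthogonal_sudokus (s - 2) n Ls"
    and ab: "1 \<le> a" "a < b" "b \<le> s" and vw: "v < n^2" "w < n^2"
  shows "\<exists>R<n^2. \<exists>C<n^2. mols_symbol Ls a R C = v \<and> mols_symbol Ls b R C = w"
proof -
  have sol: "sudoku_solution n (Ls (b - 3))" if "3 \<le> b"
    using M ab that by (auto simp: mutually_orthogonal_sudokus_def)
  consider "a = 1" "b = 2" | "a = 1" "3 \<le> b" | "a = 2" "3 \<le> b" | "3 \<le> a"
    using ab by linarith
  then show ?thesis
  proof cases
    case 1
    then show ?thesis using vw by (auto simp: mols_symbol_def)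
  next
    case 2
    then have "bij_betw (Ls (b - 3) v) {..<n^2} {..<n^2}"
      using sol[OF \<open>3 \<le> b\<close>] vw by (simp add: sudoku_solution_def latin_square_def)
    then have "w \<in> Ls (b - 3) v ` {..<n^2}" using vw by (simp add: bij_betw_def)
    then obtain C where "C < n^2" "Ls (b - 3) v C = w" by auto
    then show ?thesis using 2 vw by (auto simp: mols_symbol_def)
  next
    case 3
    then have "bij_betw (\<lambda>R. Ls (b - 3) R v) {..<n^2} {..<n^2}"
      using sol[OF \<open>3 \<le> b\<close>] vw by (simp add: sudoku_solution_def latin_square_def)
    then have "w \<in> (\<lambda>R. Ls (b - 3) R v) ` {..<n^2}" using vw by (simp add: bij_betw_def)
    then obtain R where "R < n^2" "Ls (b - 3) R v = w" by auto
    then show ?thesis using 3 vw by (auto simp: mols_symbol_def)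
  next
    case 4
    then have "orthogonal (n^2) (Ls (a - 3)) (Ls (b - 3))"
      using M ab by (auto simp: mutually_orthogonal_sudokus_def)
    then have "(v, w) \<in> (\<lambda>(R, C). (Ls (a - 3) R C, Ls (b - 3) R C)) ` ({..<n^2} \<times> {..<n^2})"
      using vw by (simp add: orthogonal_def bij_betw_def)
    then obtain R C where "R < n^2" "C < n^2" "Ls (a - 3) R C = v" "Ls (b - 3) R C = w" by auto
    then show ?thesis using 4 ab by (auto simp: mols_symbol_def)
  qed
qed

lemma mols_symbol_pair:
  assumes M: "mutually_orthogonal_sudokus (s - 2) n Ls"
    and "a \<in> {1..s}" "b \<in> {1..s}" "a \<noteq> b" "v < n^2" "w < n^2"
  shows "\<exists>R<n^2. \<exists>C<n^2. mols_symbol Ls a R C = v \<and> mols_symbol Ls b R C = w"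
proof (cases "a < b")
  case True
  then show ?thesis using mols_symbol_pair_ordered[OF M] assms by simp
next
  case False
  then have "b < a" using \<open>a \<noteq> b\<close> by simp
  then show ?thesis using mols_symbol_pair_ordered[OF M, of b a w v] assms by auto
qed

lemma column_of_cell_less: "R < n^2 \<Longrightarrow> C < n^2 \<Longrightarrow> R * n^2 + C < (n::nat)^4"
  using two_digits_less[of R "n^2" C] by (simp flip: power_mult)

lemma mols_array_cell:
  assumes "C < n^2"
  shows "mols_array n Ls (i, j) (R * n^2 + C) =
    (if j = 1 then mols_symbol Ls i R C div n else mols_symbol Ls i R C mod n)"
proof -
  have "n^2 \<noteq> 0" using assms by (metis not_less0)
  then have "(R * n^2 + C) div n^2 = R" "(R * n^2 + C) mod n^2 = C" using assms by simp_all
  then show ?thesis by (simp add: mols_array_def)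
qed

lemma mols_array_less:
  assumes M: "mutually_orthogonal_sudokus (s - 2) n Ls" and r: "r \<in> sa_rows s" and c: "c < n^4"
  shows "mols_array n Ls r c < n"
proof -
  have "n \<noteq> 0" using c by (cases n) auto
  moreover have "c < n^2 * n^2" using c by (simp flip: power_add)
  ultimately have "c div n^2 < n^2" "c mod n^2 < n^2" by (simp_all add: less_mult_imp_div_less)
  then have "mols_symbol Ls (fst r) (c div n^2) (c mod n^2) < n^2"
    using r by (intro mols_symbol_less[OF M]) (auto simp: sa_rows_def)
  then show ?thesis by (simp add: mols_array_def Let_def high_digit_less low_digit_less)
qed

lemma mols_array_two_bands:
  assumes M: "mutually_orthogonal_sudokus (s - 2) n Ls"
    and ab: "a \<in> {1..s}" "b \<in> {1..s}" "a \<noteq> b" and f: "\<forall>r\<in>{(a,1),(a,2),(b,1),(b,2)}. f r < n"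
  shows "\<exists>c<n^4. \<forall>r\<in>{(a,1),(a,2),(b,1),(b,2)}. mols_array n Ls r c = f r"
proof -
  have "f (a,1) * n + f (a,2) < n^2" "f (b,1) * n + f (b,2) < n^2"
    using f by (auto intro: two_digits_less)
  then obtain R C where RC: "R < n^2" "C < n^2"
    "mols_symbol Ls a R C = f (a,1) * n + f (a,2)" "mols_symbol Ls b R C = f (b,1) * n + f (b,2)"
    using mols_symbol_pair[OF M ab] by blast
  have "mols_array n Ls (k, j) (R * n^2 + C) = f (k, j)" if "k \<in> {a, b}" "j \<in> {1, 2}" for k j
    using that RC f by (auto simp: mols_array_cell)
  then show ?thesis using column_of_cell_less[OF RC(1,2)] by blast
qed

lemma mols_array_box:
  assumes M: "mutually_orthogonal_sudokus (s - 2) n Ls"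
    and i: "3 \<le> i" "i \<le> s" and f: "\<forall>r\<in>{(1,1),(2,1),(i,1),(i,2)}. f r < n"
  shows "\<exists>c<n^4. \<forall>r\<in>{(1,1),(2,1),(i,1),(i,2)}. mols_array n Ls r c = f r"
proof -
  let ?box = "\<lambda>(x, y). Ls (i - 3) (f (1,1) * n + x) (f (2,1) * n + y)"
  have fb: "f (1,1) < n" "f (2,1) < n" using f by auto
  then have "bij_betw ?box ({..<n} \<times> {..<n}) {..<n^2}"
    using M i by (simp add: mutually_orthogonal_sudokus_def sudoku_solution_def)
  moreover have "f (i,1) * n + f (i,2) < n^2" using f by (auto intro: two_digits_less)
  ultimately have "f (i,1) * n + f (i,2) \<in> ?box ` ({..<n} \<times> {..<n})" by (simp add: bij_betw_def)
  then obtain x y where xy: "x < n" "y < n"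
    "Ls (i - 3) (f (1,1) * n + x) (f (2,1) * n + y) = f (i,1) * n + f (i,2)"
    by auto
  define R C where "R = f (1,1) * n + x" and "C = f (2,1) * n + y"
  have RC: "R < n^2" "C < n^2" using xy fb by (simp_all add: R_def C_def two_digits_less)
  have "Ls (i - 3) R C = f (i,1) * n + f (i,2)" using xy by (simp add: R_def C_def)
  then have "\<forall>r\<in>{(1,1),(2,1),(i,1),(i,2)}. mols_array n Ls r (R * n^2 + C) = f r"
    using f i xy RC by (auto simp: mols_array_cell mols_symbol_def R_def C_def)
  then show ?thesis using column_of_cell_less[OF RC] by blast
qed

lemma mutually_orthogonal_sudokus_imp_sudoku_array:
  assumes M: "mutually_orthogonal_sudokus (s - 2) n Ls"
  shows "sudoku_array s n (mols_array n Ls)"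
proof (rule sudoku_arrayI)
  show "\<forall>r\<in>sa_rows s. \<forall>c<n^4. mols_array n Ls r c < n" using mols_array_less[OF M] by blast
  fix T f assume T: "sudoku_top_justified s T" and f: "\<forall>r\<in>T. f r < n"
  from T show "\<exists>c<n^4. \<forall>r\<in>T. mols_array n Ls r c = f r"
  proof (cases rule: sudoku_top_justified_cases)
    case (1 a b)
    then show ?thesis using mols_array_two_bands[OF M, of a b f] f by blast
  next
    case (2 i)
    then show ?thesis using mols_array_box[OF M, of i f] f by blast
  qed
qed

theorem theorem2p1:
  fixes n s :: nat
  assumes "n \<ge> 1" and "s \<ge> 3"
  shows "(\<exists>A. sudoku_array s n A) \<longleftrightarrow> (\<exists>Ls. mutually_orthogonal_sudokus (s - 2) n Ls)"
  using sudoku_array_imp_mutually_orthogonal_sudokus mutually_orthogonal_sudokus_imp_sudoku_array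
  by blast

end
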